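(* Let $A$ be an associative unital algebra over a commutative ring $k$ and $B$ a subalgebra with $L(A)\subseteq B\subseteq\mathrm{End}_k(A)$ such that $A^B\subseteq Z(A)$ (the centre of $A$). Then $A$ is a critically compressible left $B$-module if and only if $A^B$ is an integral domain and large in $A$.
   Context: $L(A)=\{L_a:a\in A\}$, $L_a(x)=ax$; $A$ is a left $B$-module via $\varphi\cdot a=\varphi(a)$. $A^B=\{a\in A: b\cdot a=(b\cdot1)a\ \forall b\in B\}\cong\mathrm{End}_B(A)$. $A^B$ is large in $A$ if $A^B\cap I\neq 0$ for every nonzero $B$-stable left ideal $I$ of $A$. A nonzero module is critically compressible if it embeds into each of its nonzero submodules and into none of its factor modules $M/N$ with $N\neq0$. *)

theory Defs
  imports Main "HOL.Modules"
begin

text \<open>A is modelled by a type 'a of class ring_1 (associative unital ring);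
 the commutative base ring k is a type 'k of class comm_ring_1, acting on 'a via
 a scalar multiplication s making 'a a k-algebra.\<close>

definition k_algebra :: "('k::comm_ring_1 \<Rightarrow> 'a::ring_1 \<Rightarrow> 'a) \<Rightarrow> bool" where
  "k_algebra s \<longleftrightarrow> module s \<and>
     (\<forall>c x y. s c (x * y) = s c x * y \<and> s c (x * y) = x * s c y)"

definition End_k :: "('k::comm_ring_1 \<Rightarrow> 'a::ring_1 \<Rightarrow> 'a) \<Rightarrow> ('a \<Rightarrow> 'a) set" where
  "End_k s = {f. module_hom s s f}"

definition subalgebra_End :: "('k::comm_ring_1 \<Rightarrow> 'a::ring_1 \<Rightarrow> 'a) \<Rightarrow> ('a \<Rightarrow> 'a) set \<Rightarrow> bool" where
  "subalgebra_End s B \<longleftrightarrow> B \<subseteq> End_k s \<and> id \<in> B \<and> (\<lambda>x. 0) \<in> B \<and>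
     (\<forall>f\<in>B. \<forall>g\<in>B. (\<lambda>x. f x + g x) \<in> B \<and> f \<circ> g \<in> B) \<and>
     (\<forall>f\<in>B. (\<lambda>x. - f x) \<in> B) \<and>
     (\<forall>c. \<forall>f\<in>B. (\<lambda>x. s c (f x)) \<in> B)"

definition Lmaps :: "('a::ring_1 \<Rightarrow> 'a) set" where
  "Lmaps = range (\<lambda>a x. a * x)"

definition invariants :: "('a::ring_1 \<Rightarrow> 'a) set \<Rightarrow> 'a set" where
  "invariants B = {a. \<forall>\<phi>\<in>B. \<phi> a = \<phi> 1 * a}"

definition centre :: "'a::ring_1 set" where
  "centre = {z. \<forall>x. z * x = x * z}"

definition is_integral_domain :: "'a::ring_1 set \<Rightarrow> bool" where
  "is_integral_domain S \<longleftrightarrow>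
     0 \<in> S \<and> 1 \<in> S \<and> (\<forall>a\<in>S. \<forall>b\<in>S. a + b \<in> S \<and> a * b \<in> S) \<and> (\<forall>a\<in>S. - a \<in> S) \<and>
     (1::'a) \<noteq> 0 \<and> (\<forall>a\<in>S. \<forall>b\<in>S. a * b = b * a) \<and>
     (\<forall>a\<in>S. \<forall>b\<in>S. a * b = 0 \<longrightarrow> a = 0 \<or> b = 0)"

text \<open>B-submodules of the left B-module A (action \<phi>\<cdot>a = \<phi>(a)).\<close>
definition B_submodule :: "('a::ring_1 \<Rightarrow> 'a) set \<Rightarrow> 'a set \<Rightarrow> bool" where
  "B_submodule B N \<longleftrightarrow> 0 \<in> N \<and> (\<forall>x\<in>N. \<forall>y\<in>N. x + y \<in> N) \<and> (\<forall>x\<in>N. - x \<in> N) \<and>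
     (\<forall>\<phi>\<in>B. \<forall>x\<in>N. \<phi> x \<in> N)"

definition left_ideal :: "'a::ring_1 set \<Rightarrow> bool" where
  "left_ideal I \<longleftrightarrow> 0 \<in> I \<and> (\<forall>x\<in>I. \<forall>y\<in>I. x + y \<in> I) \<and> (\<forall>x\<in>I. - x \<in> I) \<and>
     (\<forall>a. \<forall>x\<in>I. a * x \<in> I)"

definition B_stable :: "('a \<Rightarrow> 'a) set \<Rightarrow> 'a set \<Rightarrow> bool" where
  "B_stable B I \<longleftrightarrow> (\<forall>\<phi>\<in>B. \<forall>x\<in>I. \<phi> x \<in> I)"

definition large_in :: "('a::ring_1 \<Rightarrow> 'a) set \<Rightarrow> 'a set \<Rightarrow> bool" where
  "large_in B S \<longleftrightarrow>
     (\<forall>I. left_ideal I \<and> B_stable B I \<and> I \<noteq> {0} \<longrightarrow> S \<inter> I \<noteq> {0})"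

definition B_hom :: "('a::ring_1 \<Rightarrow> 'a) set \<Rightarrow> ('a \<Rightarrow> 'a) \<Rightarrow> bool" where
  "B_hom B f \<longleftrightarrow> (\<forall>x y. f (x + y) = f x + f y) \<and> (\<forall>\<phi>\<in>B. \<forall>x. f (\<phi> x) = \<phi> (f x))"

definition embeds_into_sub :: "('a::ring_1 \<Rightarrow> 'a) set \<Rightarrow> 'a set \<Rightarrow> bool" where
  "embeds_into_sub B N \<longleftrightarrow> (\<exists>f. B_hom B f \<and> inj f \<and> range f \<subseteq> N)"

text \<open>The factor module A/N: elements are cosets a + N, with induced operations.\<close>
definition coset :: "'a::ring_1 set \<Rightarrow> 'a \<Rightarrow> 'a set" where
  "coset N a = {a + n | n. n \<in> N}"

definition quot_carrier :: "'a::ring_1 set \<Rightarrow> 'a set set" where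
  "quot_carrier N = range (coset N)"

definition quot_add :: "'a::ring_1 set \<Rightarrow> 'a set \<Rightarrow> 'a set" where
  "quot_add C D = {c + d | c d. c \<in> C \<and> d \<in> D}"

definition quot_act :: "'a::ring_1 set \<Rightarrow> ('a \<Rightarrow> 'a) \<Rightarrow> 'a set \<Rightarrow> 'a set" where
  "quot_act N \<phi> C = {\<phi> c + n | c n. c \<in> C \<and> n \<in> N}"

definition embeds_into_quot :: "('a::ring_1 \<Rightarrow> 'a) set \<Rightarrow> 'a set \<Rightarrow> bool" where
  "embeds_into_quot B N \<longleftrightarrow> (\<exists>f. (\<forall>x. f x \<in> quot_carrier N) \<and>
     (\<forall>x y. f (x + y) = quot_add (f x) (f y)) \<and>
     (\<forall>\<phi>\<in>B. \<forall>x. f (\<phi> x) = quot_act N \<phi> (f x)) \<and> inj f)"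

definition critically_compressible :: "('a::ring_1 \<Rightarrow> 'a) set \<Rightarrow> bool" where
  "critically_compressible B \<longleftrightarrow> (\<exists>x::'a. x \<noteq> 0) \<and>
     (\<forall>N. B_submodule B N \<and> N \<noteq> {0} \<longrightarrow> embeds_into_sub B N) \<and>
     (\<forall>N. B_submodule B N \<and> N \<noteq> {0} \<longrightarrow> \<not> embeds_into_quot B N)"

end

theory Submission
  imports Defs
begin

(* Since L(A) \<subseteq> B, the B-submodules of A are exactly its B-stable left
   ideals, and every B-module map f : A \<rightarrow> A is right multiplication by f(1), which
   lies in A^B; conversely right multiplication by any c \<in> A^B is B-linear.  Hence A
   embeds into a submodule N iff N contains some c \<in> A^B with x \<mapsto> x c injective,
   i.e. with zero annihilator {x. x c = 0}, itself a B-submodule.  On the other side,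
   a B-map A \<rightarrow> A/N sends every x with x\<cdot>f(1) \<in> N to the zero coset; if N contains a
   nonzero central element d this identifies d with 0, so A cannot embed into A/N. *)

lemma inj_right_mult_iff:
  fixes c :: "'a::ring_1"
  shows "inj (\<lambda>x. x * c) \<longleftrightarrow> {x. x * c = 0} = {0}"
proof
  assume "inj (\<lambda>x. x * c)"
  then show "{x. x * c = 0} = {0}" by (auto dest: injD[where y = 0])
next
  assume ann: "{x. x * c = 0} = {0}"
  show "inj (\<lambda>x. x * c)"
  proof (rule injI)
    fix x y assume "x * c = y * c"
    then have "x - y \<in> {x. x * c = 0}" by (simp add: left_diff_distrib)
    then show "x = y" using ann by simp
  qed
qed

lemma quot_act_left_mult_coset:
  fixes N :: "'a::ring_1 set"
  assumes N: "left_ideal N" and xc0: "x * c0 \<in> N"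
  shows "quot_act N (\<lambda>y. x * y) (coset N c0) = N"
proof
  show "quot_act N (\<lambda>y. x * y) (coset N c0) \<subseteq> N"
    unfolding quot_act_def coset_def
  proof clarify
    fix m n assume "m \<in> N" "n \<in> N"
    then show "x * (c0 + m) + n \<in> N"
      using N xc0 unfolding left_ideal_def by (simp add: distrib_left)
  qed
next
  show "N \<subseteq> quot_act N (\<lambda>y. x * y) (coset N c0)"
  proof
    fix n assume n: "n \<in> N"
    have "- (x * c0) + n \<in> N" using N xc0 n unfolding left_ideal_def by blast
    moreover have "c0 \<in> coset N c0" using N unfolding coset_def left_ideal_def by force
    moreover have "n = x * c0 + (- (x * c0) + n)" by simp
    ultimately show "n \<in> quot_act N (\<lambda>y. x * y) (coset N c0)"
      unfolding quot_act_def by blast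
  qed
qed

locale left_mult_subalgebra =
  fixes s :: "'k::comm_ring_1 \<Rightarrow> 'a::ring_1 \<Rightarrow> 'a"
    and B :: "('a \<Rightarrow> 'a) set"
  assumes subalg: "subalgebra_End s B"
    and Lmaps: "Lmaps \<subseteq> B"
begin

lemma B_add: "\<phi> \<in> B \<Longrightarrow> \<phi> (x + y) = \<phi> x + \<phi> y"
  using subalg module_hom.add unfolding subalgebra_End_def End_k_def by blast

lemma B_zero: "\<phi> \<in> B \<Longrightarrow> \<phi> 0 = 0"
  using B_add[of \<phi> 0 0] by simp

lemma B_minus: "\<phi> \<in> B \<Longrightarrow> \<phi> (- x) = - \<phi> x"
  using B_add[of \<phi> x "- x"] B_zero[of \<phi>] by (simp add: add_eq_0_iff2)

lemma left_mult_in_B: "(\<lambda>y. a * y) \<in> B"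
  using Lmaps unfolding Lmaps_def by auto

text \<open>Elements of A^B can be pulled out on the right: \<phi>(x c) = \<phi>(x) c, because
  \<phi> \<circ> L_x \<in> B.\<close>
lemma B_mult_invariant:
  assumes "\<phi> \<in> B" and c: "c \<in> invariants B"
  shows "\<phi> (x * c) = \<phi> x * c"
proof -
  have "\<phi> \<circ> (\<lambda>y. x * y) \<in> B"
    using subalg assms(1) left_mult_in_B unfolding subalgebra_End_def by blast
  then show ?thesis using c unfolding invariants_def by force
qed

lemma invariants_subring:
  shows "0 \<in> invariants B" and "1 \<in> invariants B"
    and "a \<in> invariants B \<Longrightarrow> b \<in> invariants B \<Longrightarrow> a + b \<in> invariants B"
    and "a \<in> invariants B \<Longrightarrow> - a \<in> invariants B"
    and "a \<in> invariants B \<Longrightarrow> b \<in> invariants B \<Longrightarrow> a * b \<in> invariants B"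
proof -
  show "0 \<in> invariants B" "1 \<in> invariants B"
    unfolding invariants_def using B_zero by simp_all
  show "a \<in> invariants B \<Longrightarrow> b \<in> invariants B \<Longrightarrow> a + b \<in> invariants B"
    unfolding invariants_def using B_add by (simp add: distrib_left)
  show "a \<in> invariants B \<Longrightarrow> - a \<in> invariants B"
    unfolding invariants_def using B_minus by simp
  assume a: "a \<in> invariants B" and b: "b \<in> invariants B"
  show "a * b \<in> invariants B"
    unfolding invariants_def
  proof (intro CollectI ballI)
    fix \<phi> assume "\<phi> \<in> B"
    then have "\<phi> (a * b) = \<phi> 1 * a * b"
      using a B_mult_invariant[OF _ b] unfolding invariants_def by simp
    then show "\<phi> (a * b) = \<phi> 1 * (a * b)" by (simp add: mult.assoc)
  qed
qed

text \<open>Because L(A) \<subseteq> B, B-submodules of A are the same as B-stable left ideals.\<close>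
lemma B_submodule_iff: "B_submodule B N \<longleftrightarrow> left_ideal N \<and> B_stable B N"
  using left_mult_in_B unfolding B_submodule_def left_ideal_def B_stable_def by blast

lemma B_hom_right_mult:
  assumes f: "B_hom B f"
  shows "f x = x * f 1" and "f 1 \<in> invariants B"
proof -
  have fx: "f x = x * f 1" for x
  proof -
    have "f (x * 1) = x * f 1"
      using f left_mult_in_B[of x] unfolding B_hom_def by blast
    then show ?thesis by simp
  qed
  then show "f x = x * f 1" .
  show "f 1 \<in> invariants B"
    unfolding invariants_def
  proof (intro CollectI ballI)
    fix \<phi> assume "\<phi> \<in> B"
    then have "\<phi> (f 1) = f (\<phi> 1)" using f unfolding B_hom_def by simp
    also have "\<dots> = \<phi> 1 * f 1" by (rule fx)
    finally show "\<phi> (f 1) = \<phi> 1 * f 1" .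
  qed
qed

lemma right_mult_B_hom: "c \<in> invariants B \<Longrightarrow> B_hom B (\<lambda>x. x * c)"
  unfolding B_hom_def using B_mult_invariant by (simp add: distrib_right)

lemma annihilator_B_submodule:
  assumes c: "c \<in> invariants B"
  shows "B_submodule B {x. x * c = 0}"
  unfolding B_submodule_def
  using B_mult_invariant[OF _ c] B_zero by (auto simp: distrib_right)

lemma embeds_into_sub_iff:
  assumes N: "B_submodule B N"
  shows "embeds_into_sub B N \<longleftrightarrow>
           (\<exists>c \<in> invariants B \<inter> N. {x. x * c = 0} = {0})"
proof
  assume "embeds_into_sub B N"
  then obtain f where f: "B_hom B f" "inj f" "range f \<subseteq> N"
    unfolding embeds_into_sub_def by blast
  have "inj (\<lambda>x. x * f 1)"
    using f(2) B_hom_right_mult(1)[OF f(1), symmetric] by (metis injD injI)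
  then have "{x. x * f 1 = 0} = {0}" using inj_right_mult_iff by blast
  moreover have "f 1 \<in> invariants B \<inter> N" using f(3) B_hom_right_mult(2)[OF f(1)] by auto
  ultimately show "\<exists>c \<in> invariants B \<inter> N. {x. x * c = 0} = {0}" by blast
next
  assume "\<exists>c \<in> invariants B \<inter> N. {x. x * c = 0} = {0}"
  then obtain c where c: "c \<in> invariants B" "c \<in> N" "{x. x * c = 0} = {0}" by blast
  have "B_hom B (\<lambda>x. x * c)" using right_mult_B_hom[OF c(1)] .
  moreover have "inj (\<lambda>x. x * c)" unfolding inj_right_mult_iff by (rule c(3))
  moreover have "range (\<lambda>x. x * c) \<subseteq> N"
    using N c(2) unfolding B_submodule_iff left_ideal_def by auto
  ultimately show "embeds_into_sub B N" unfolding embeds_into_sub_def by blast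
qed

text \<open>A cannot embed into A/N when N contains a nonzero central element d: any
  B-map A \<rightarrow> A/N sends both d and 0 to the zero coset N.\<close>
lemma no_embedding_into_quotient:
  assumes N: "B_submodule B N"
    and d: "d \<in> N" "d \<in> centre" "d \<noteq> 0"
  shows "\<not> embeds_into_quot B N"
proof
  assume "embeds_into_quot B N"
  then obtain f where f_quot: "\<forall>x. f x \<in> quot_carrier N"
    and f_lin: "\<forall>\<phi>\<in>B. \<forall>x. f (\<phi> x) = quot_act N \<phi> (f x)" and "inj f"
    unfolding embeds_into_quot_def by blast
  obtain c0 where c0: "f 1 = coset N c0"
    using f_quot unfolding quot_carrier_def by auto
  have ideal: "left_ideal N" using N B_submodule_iff by blast
  have killed: "f x = N" if "x * c0 \<in> N" for x
  proof -
    have "f ((\<lambda>y. x * y) 1) = quot_act N (\<lambda>y. x * y) (f 1)"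
      using f_lin left_mult_in_B[of x] by blast
    then have "f x = quot_act N (\<lambda>y. x * y) (coset N c0)" using c0 by simp
    also have "\<dots> = N" by (rule quot_act_left_mult_coset[OF ideal that])
    finally show ?thesis .
  qed
  have "c0 * d \<in> N" using ideal d(1) unfolding left_ideal_def by blast
  moreover have "d * c0 = c0 * d" using d(2) unfolding centre_def by blast
  ultimately have "f d = N" using killed by simp
  moreover have "f 0 = N" using killed ideal unfolding left_ideal_def by simp
  ultimately have "f d = f 0" by simp
  then show False using \<open>inj f\<close> d(3) by (meson injD)
qed

lemma large_in_iff:
  "large_in B R \<longleftrightarrow> (\<forall>N. B_submodule B N \<and> N \<noteq> {0} \<longrightarrow> R \<inter> N \<noteq> {0})"
  unfolding large_in_def B_submodule_iff by simp

lemma compressible_imp_large_domain: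
  assumes cc: "critically_compressible B" and central: "invariants B \<subseteq> centre"
  shows "is_integral_domain (invariants B) \<and> large_in B (invariants B)"
proof -
  let ?R = "invariants B"
  have good: "\<exists>c \<in> ?R \<inter> N. {x. x * c = 0} = {0}"
    if "B_submodule B N" "N \<noteq> {0}" for N
    using cc that embeds_into_sub_iff unfolding critically_compressible_def by blast
  have nontrivial: "(1::'a) \<noteq> 0"
    using cc unfolding critically_compressible_def by (metis mult_1_left mult_zero_left)
  have large: "large_in B ?R"
    unfolding large_in_iff
  proof (intro allI impI)
    fix N assume "B_submodule B N \<and> N \<noteq> {0}"
    then obtain c where c: "c \<in> ?R \<inter> N" "{x. x * c = 0} = {0}" using good by blast
    have "c \<noteq> 0"
    proof
      assume "c = 0"
      then have "1 \<in> {x. x * c = 0}" by simp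
      then show False using c(2) nontrivial by simp
    qed
    then show "?R \<inter> N \<noteq> {0}" using c(1) by blast
  qed
  (* If a b = 0 with a, b \<noteq> 0, the annihilator of a contains b \<noteq> 0 (as b a = a b),
     hence a regular invariant c; but then a c = c a = 0 forces a = 0. *)
  have no_zero_divisors: "a = 0 \<or> b = 0"
    if a: "a \<in> ?R" and b: "b \<in> ?R" and ab: "a * b = 0" for a b
  proof (rule ccontr)
    assume nz: "\<not> (a = 0 \<or> b = 0)"
    have "b * a = 0" using ab a central unfolding centre_def by auto
    then have "{x. x * a = 0} \<noteq> {0}" using nz by blast
    then obtain c where c: "c \<in> ?R" "c * a = 0" "{x. x * c = 0} = {0}"
      using good annihilator_B_submodule[OF a] by blast
    have "a * c = 0" using c(1,2) central unfolding centre_def by auto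
    then show False using c(3) nz by blast
  qed
  have commutative: "a * b = b * a" if "a \<in> ?R" for a b
    using that central unfolding centre_def by auto
  have "is_integral_domain ?R"
    unfolding is_integral_domain_def
    using invariants_subring nontrivial no_zero_divisors commutative by simp
  with large show ?thesis by blast
qed

text \<open>Conversely, if A^B is a large domain, every nonzero invariant is regular, and
  critical compressibility follows.\<close>
lemma large_domain_imp_compressible:
  assumes dom: "is_integral_domain (invariants B)" and large: "large_in B (invariants B)"
    and central: "invariants B \<subseteq> centre"
  shows "critically_compressible B"
proof -
  let ?R = "invariants B"
  have meets: "\<exists>d \<in> ?R \<inter> N. d \<noteq> 0" if N: "B_submodule B N" "N \<noteq> {0}" for N
  proof -
    have "?R \<inter> N \<noteq> {0}" using large N unfolding large_in_iff by blast
    moreover have "0 \<in> ?R \<inter> N"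
      using N(1) invariants_subring(1) unfolding B_submodule_def by blast
    ultimately show ?thesis by blast
  qed
  have no_zero_divisors: "\<forall>a\<in>?R. \<forall>b\<in>?R. a * b = 0 \<longrightarrow> a = 0 \<or> b = 0"
    using dom unfolding is_integral_domain_def by (elim conjE)
  (* a nonzero annihilator of c \<in> A^B would contain a nonzero invariant d with d c = 0 *)
  have regular: "{x. x * c = 0} = {0}" if c: "c \<in> ?R" "c \<noteq> 0" for c
  proof (rule ccontr)
    assume "{x. x * c = 0} \<noteq> {0}"
    then obtain d where "d \<in> ?R" "d * c = 0" "d \<noteq> 0"
      using meets[OF annihilator_B_submodule[OF c(1)]] by blast
    then show False using no_zero_divisors c by blast
  qed
  show ?thesis
    unfolding critically_compressible_def
  proof (intro conjI allI impI)
    show "\<exists>x::'a. x \<noteq> 0" using dom unfolding is_integral_domain_def by blast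
  next
    fix N assume N: "B_submodule B N \<and> N \<noteq> {0}"
    then obtain c where "c \<in> ?R \<inter> N" "c \<noteq> 0" using meets by blast
    then show "embeds_into_sub B N" using embeds_into_sub_iff N regular by blast
  next
    fix N assume N: "B_submodule B N \<and> N \<noteq> {0}"
    then obtain d where "d \<in> ?R \<inter> N" "d \<noteq> 0" using meets by blast
    then show "\<not> embeds_into_quot B N"
      using N central no_embedding_into_quotient by blast
  qed
qed

end

theorem corollary3p5:
  fixes s :: "'k::comm_ring_1 \<Rightarrow> 'a::ring_1 \<Rightarrow> 'a"
    and B :: "('a \<Rightarrow> 'a) set"
  assumes "k_algebra s"
    and "subalgebra_End s B"
    and "Lmaps \<subseteq> B"
    and "invariants B \<subseteq> centre"
  shows "critically_compressible B \<longleftrightarrow>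
           is_integral_domain (invariants B) \<and> large_in B (invariants B)"
proof -
  interpret left_mult_subalgebra s B using assms(2,3) by unfold_locales
  show ?thesis
    using compressible_imp_large_domain large_domain_imp_compressible assms(4) by blast
qed

end
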